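(* Let $\mathbb{F}$ be a field and $n\ge1$. Every maximal (with respect to inclusion) nilpotent subsemigroup $T$ of $M(n,\mathbb{F})$ is a subalgebra of $M(n,\mathbb{F})$, i.e. $T$ is closed under addition and multiplication by scalars (in addition to matrix multiplication).
   Context: $M(n,\mathbb{F})$ denotes the semigroup of all $n\times n$ matrices over $\mathbb{F}$ under matrix multiplication. A semigroup $S$ with zero $0$ is nilpotent of nilpotency degree $k$ if $a_1a_2\cdots a_k=0$ for all $a_1,\dots,a_k\in S$ and there exist $b_1,\dots,b_{k-1}\in S$ with $b_1\cdots b_{k-1}\neq 0$; a nilpotent subsemigroup of $M(n,\mathbb{F})$ is one that is nilpotent with the zero matrix as its zero. Maximality here is among all nilpotent subsemigroups of $M(n,\mathbb{F})$ (of any nilpotency degree). *)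

theory Defs
  imports "HOL-Analysis.Analysis"
begin

text \<open>n x n matrices over a field are modelled as the type 'a^'n^'n with 'n a finite
  index type (n = CARD('n) >= 1 automatically).\<close>

definition mat_prod_list :: "('a::field^'n^'n) list \<Rightarrow> 'a^'n^'n" where
  "mat_prod_list xs = foldr (\<lambda>A B. A ** B) xs (mat 1)"

definition nilpotent_subsemigroup :: "('a::field^'n^'n) set \<Rightarrow> bool" where
  "nilpotent_subsemigroup S \<longleftrightarrow>
     0 \<in> S \<and> (\<forall>A\<in>S. \<forall>B\<in>S. A ** B \<in> S) \<and>
     (\<exists>k. \<forall>xs. length xs = k \<and> set xs \<subseteq> S \<longrightarrow> mat_prod_list xs = 0)"

definition maximal_nilpotent_subsemigroup :: "('a::field^'n^'n) set \<Rightarrow> bool" where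
  "maximal_nilpotent_subsemigroup T \<longleftrightarrow>
     nilpotent_subsemigroup T \<and>
     (\<forall>S. nilpotent_subsemigroup S \<and> T \<subseteq> S \<longrightarrow> S = T)"

definition mat_scale :: "'a::field \<Rightarrow> 'a^'n^'n \<Rightarrow> 'a^'n^'n" where
  "mat_scale c A = (\<chi> i j. c * A $ i $ j)"

end

theory Submission
  imports Defs
begin

text \<open>Matrix multiplication is multilinear, so a product of k elements of the linear span of a
  nilpotent subsemigroup T expands into a linear combination of products of k elements of T.
  Hence the span is again a nilpotent subsemigroup, of the same nilpotency degree, and
  maximality of T forces T to be its own span.\<close>

lemma matrix_add_rdistrib:
  fixes A B :: "'a::semiring_1^'n^'m" and C :: "'a^'p^'n"
  shows "(A + B) ** C = A ** C + B ** C"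
  by (simp add: vec_eq_iff matrix_matrix_mult_def distrib_right sum.distrib)

lemma mat_scale_mult_left: "mat_scale c A ** B = mat_scale c (A ** B :: 'a::field^'n^'n)"
  by (simp add: vec_eq_iff mat_scale_def matrix_matrix_mult_def sum_distrib_left mult.assoc)

lemma mat_scale_mult_right: "A ** mat_scale c B = mat_scale c (A ** B :: 'a::field^'n^'n)"
  by (simp add: vec_eq_iff mat_scale_def matrix_matrix_mult_def sum_distrib_left
      mult.left_commute)

lemma mat_prod_list_Cons [simp]: "mat_prod_list (A # xs) = A ** mat_prod_list xs"
  by (simp add: mat_prod_list_def)

inductive_set matrix_span :: "('a::field^'n^'n) set \<Rightarrow> ('a^'n^'n) set" for T where
  span_base: "A \<in> T \<Longrightarrow> A \<in> matrix_span T"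
| span_add: "A \<in> matrix_span T \<Longrightarrow> B \<in> matrix_span T \<Longrightarrow> A + B \<in> matrix_span T"
| span_scale: "A \<in> matrix_span T \<Longrightarrow> mat_scale c A \<in> matrix_span T"

lemma matrix_span_mult_closed:
  assumes "\<forall>A\<in>T. \<forall>B\<in>T. A ** B \<in> T" "A \<in> matrix_span T" "B \<in> matrix_span T"
  shows "A ** B \<in> matrix_span T"
  using assms(2)
proof (induction A rule: matrix_span.induct)
  case (span_base A)
  from assms(3) show ?case
  proof (induction B rule: matrix_span.induct)
    case (span_base B)
    then show ?case using \<open>A \<in> T\<close> assms(1) by (auto intro: matrix_span.span_base)
  next
    case (span_add B1 B2)
    then show ?case by (simp add: matrix_add_ldistrib matrix_span.span_add)
  next
    case (span_scale B c)
    then show ?case by (simp add: mat_scale_mult_right matrix_span.span_scale)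
  qed
next
  case (span_add A1 A2)
  then show ?case by (simp add: matrix_add_rdistrib matrix_span.span_add)
next
  case (span_scale A c)
  then show ?case by (simp add: mat_scale_mult_left matrix_span.span_scale)
qed

lemma matrix_span_sandwich_zero:
  fixes L R :: "'a::field^'n^'n"
  assumes "\<forall>B\<in>T. L ** B ** R = 0" "A \<in> matrix_span T"
  shows "L ** A ** R = 0"
  using assms(2)
proof (induction A rule: matrix_span.induct)
  case (span_add A B)
  then show ?case by (simp add: matrix_add_ldistrib matrix_add_rdistrib)
next
  case (span_scale A c)
  have "L ** mat_scale c A ** R = mat_scale c (L ** A ** R)"
    by (simp add: mat_scale_mult_left mat_scale_mult_right)
  then show ?case using span_scale.IH by (simp add: vec_eq_iff mat_scale_def)
qed (use assms(1) in auto)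

text \<open>The factors are replaced by elements of T one at a time from the left; L absorbs the
  prefix already replaced.\<close>

lemma mat_prod_list_matrix_span_zero:
  fixes L :: "'a::field^'n^'n"
  assumes "\<forall>ys. length ys = length xs \<and> set ys \<subseteq> T \<longrightarrow> L ** mat_prod_list ys = 0"
    and "set xs \<subseteq> matrix_span T"
  shows "L ** mat_prod_list xs = 0"
  using assms
proof (induction xs arbitrary: L)
  case Nil
  then show ?case by auto
next
  case (Cons A xs)
  have annihilated: "L ** B ** mat_prod_list xs = 0" if "B \<in> T" for B
  proof (rule Cons.IH)
    show "\<forall>ys. length ys = length xs \<and> set ys \<subseteq> T \<longrightarrow> L ** B ** mat_prod_list ys = 0"
    proof (intro allI impI)
      fix ys assume "length ys = length xs \<and> set ys \<subseteq> T"
      then have "L ** mat_prod_list (B # ys) = 0"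
        using Cons.prems(1) \<open>B \<in> T\<close> by (metis insert_subset length_Cons list.set(2))
      then show "L ** B ** mat_prod_list ys = 0" by (simp add: matrix_mul_assoc)
    qed
    show "set xs \<subseteq> matrix_span T" using Cons.prems(2) by simp
  qed
  have "L ** A ** mat_prod_list xs = 0"
    using annihilated Cons.prems(2) by (auto intro: matrix_span_sandwich_zero)
  then show ?case by (simp add: matrix_mul_assoc)
qed

lemma nilpotent_subsemigroup_matrix_span:
  assumes "nilpotent_subsemigroup T"
  shows "nilpotent_subsemigroup (matrix_span T)"
proof -
  from assms obtain k where
    zero: "0 \<in> T" and mult: "\<forall>A\<in>T. \<forall>B\<in>T. A ** B \<in> T" and
    nil: "\<forall>xs. length xs = k \<and> set xs \<subseteq> T \<longrightarrow> mat_prod_list xs = 0"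
    unfolding nilpotent_subsemigroup_def by blast
  have "mat_prod_list xs = 0" if "length xs = k" "set xs \<subseteq> matrix_span T" for xs
    using mat_prod_list_matrix_span_zero[of xs T "mat 1"] nil that by simp
  then show ?thesis
    unfolding nilpotent_subsemigroup_def
    using zero mult matrix_span_mult_closed matrix_span.span_base by blast
qed

theorem lemma3:
  fixes T :: "('a::field^'n^'n) set"
  assumes "maximal_nilpotent_subsemigroup T"
  shows "(\<forall>A\<in>T. \<forall>B\<in>T. A + B \<in> T) \<and> (\<forall>c. \<forall>A\<in>T. mat_scale c A \<in> T)
         \<and> (\<forall>A\<in>T. \<forall>B\<in>T. A ** B \<in> T)"
proof -
  have nil: "nilpotent_subsemigroup T"
    using assms unfolding maximal_nilpotent_subsemigroup_def by blast
  have "T \<subseteq> matrix_span T"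
    by (auto intro: matrix_span.span_base)
  with nil have "matrix_span T = T"
    using assms nilpotent_subsemigroup_matrix_span
    unfolding maximal_nilpotent_subsemigroup_def by blast
  then show ?thesis
    using nil matrix_span.span_add[of _ T] matrix_span.span_scale[of _ T]
    unfolding nilpotent_subsemigroup_def by auto
qed

end
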